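(* Let $\alpha,\beta$ be cylindric partitions on $\mathcal C_{k,n}$ and $m$ a nonnegative integer. Let $M$ be the set of cylindric partitions $\mu$ with $\mu\subseteq\alpha$, $\mu\subseteq\beta$ and such that $\alpha/\mu$ contains exactly $m$ boxes, and let $\Lambda$ be the set of cylindric partitions $\lambda$ with $\alpha\subseteq\lambda$, $\beta\subseteq\lambda$ and such that $\lambda/\beta$ contains exactly $m$ boxes. Then \[ \sum_{\mu\in M}f_{\alpha/\mu}\,f_{\beta/\mu}=\sum_{\lambda\in\Lambda}f_{\lambda/\alpha}\,f_{\lambda/\beta}. \]
   Context: Fix integers $n>k\ge 1$. A cylindric partition is a weakly decreasing sequence $(\lambda_m)_{m\in\mathbb Z}$ of integers with $\lambda_m=\lambda_{m+k}+n-k$ for all $m$. A point $(x,y)\in\mathbb Z^2$ lies in $\lambda$ if $y\le\lambda_x$. A box is an equivalence class of points modulo translation by integer multiples of $(-k,n-k)$; $\pi$ is the projection; a box lies in $\lambda$ iff its representatives do. $\mu\subseteq\lambda$ means $\mu_m\le\lambda_m$ for all $m$; the boxes of $\lambda/\mu$ are the (finitely many) boxes in $\lambda$ not in $\mu$. A semistandard cylindric tableau of shape $\lambda/\mu$ with values in a totally ordered set is a map $R$ from the boxes of $\lambda/\mu$ to it such that $R(\pi(x,y_1))\le R(\pi(x,y_2))$ whenever $(x,y_1),(x,y_2)$ lie in $\lambda$ but not in $\mu$ and $y_1<y_2$, and $R(\pi(x_1,y))<R(\pi(x_2,y))$ whenever $(x_1,y),(x_2,y)$ lie in $\lambda$ but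 not in $\mu$ and $x_1<x_2$. A standard cylindric tableau is a semistandard cylindric tableau with values in $\{1,\dots,N\}$ for some $N\ge0$ in which each of $1,\dots,N$ occurs in exactly one box. $f_{\lambda/\mu}$ denotes the number of standard cylindric tableaux of shape $\lambda/\mu$. *)

theory Defs
  imports Main "HOL-Library.FuncSet"
begin

definition cyl_partition :: "nat \<Rightarrow> nat \<Rightarrow> (int \<Rightarrow> int) \<Rightarrow> bool" where
  "cyl_partition k n lam \<longleftrightarrow>
     (\<forall>m. lam (m + 1) \<le> lam m) \<and> (\<forall>m. lam m = lam (m + int k) + (int n - int k))"

definition in_part :: "(int \<Rightarrow> int) \<Rightarrow> int \<times> int \<Rightarrow> bool" where
  "in_part lam p \<longleftrightarrow> snd p \<le> lam (fst p)"

definition cyl_subseteq :: "(int \<Rightarrow> int) \<Rightarrow> (int \<Rightarrow> int) \<Rightarrow> bool" where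
  "cyl_subseteq mu lam \<longleftrightarrow> (\<forall>m. mu m \<le> lam m)"

definition box :: "nat \<Rightarrow> nat \<Rightarrow> int \<times> int \<Rightarrow> (int \<times> int) set" where
  "box k n p = {(fst p - j * int k, snd p + j * (int n - int k)) | j. True}"

definition skew_points :: "(int \<Rightarrow> int) \<Rightarrow> (int \<Rightarrow> int) \<Rightarrow> (int \<times> int) set" where
  "skew_points lam mu = {p. in_part lam p \<and> \<not> in_part mu p}"

definition skew_boxes :: "nat \<Rightarrow> nat \<Rightarrow> (int \<Rightarrow> int) \<Rightarrow> (int \<Rightarrow> int) \<Rightarrow> (int \<times> int) set set" where
  "skew_boxes k n lam mu = box k n ` skew_points lam mu"

definition semistandard ::
  "nat \<Rightarrow> nat \<Rightarrow> (int \<Rightarrow> int) \<Rightarrow> (int \<Rightarrow> int) \<Rightarrow> ((int \<times> int) set \<Rightarrow> 'b::linorder) \<Rightarrow> bool" where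
  "semistandard k n lam mu R \<longleftrightarrow>
     (\<forall>x y1 y2. (x, y1) \<in> skew_points lam mu \<and> (x, y2) \<in> skew_points lam mu \<and> y1 < y2
         \<longrightarrow> R (box k n (x, y1)) \<le> R (box k n (x, y2))) \<and>
     (\<forall>x1 x2 y. (x1, y) \<in> skew_points lam mu \<and> (x2, y) \<in> skew_points lam mu \<and> x1 < x2
         \<longrightarrow> R (box k n (x1, y)) < R (box k n (x2, y)))"

definition standard_tableau ::
  "nat \<Rightarrow> nat \<Rightarrow> (int \<Rightarrow> int) \<Rightarrow> (int \<Rightarrow> int) \<Rightarrow> ((int \<times> int) set \<Rightarrow> nat) \<Rightarrow> bool" where
  "standard_tableau k n lam mu R \<longleftrightarrow>
     (\<exists>N::nat. R \<in> skew_boxes k n lam mu \<rightarrow>\<^sub>E {1..N} \<and>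
               bij_betw R (skew_boxes k n lam mu) {1..N}) \<and>
     semistandard k n lam mu R"

definition num_syt :: "nat \<Rightarrow> nat \<Rightarrow> (int \<Rightarrow> int) \<Rightarrow> (int \<Rightarrow> int) \<Rightarrow> nat" where
  "num_syt k n lam mu = card {R. standard_tableau k n lam mu R}"

end

theory Submission
  imports Defs
begin

text \<open>The argument is Fomin's duality for the cylindric Young lattice. On functions \<open>v\<close> from
  cylindric partitions to \<open>\<nat>\<close> let \<open>up v l\<close> sum \<open>v\<close> over the partitions obtained from \<open>l\<close> by
  removing a box and \<open>down v m\<close> over those obtained from \<open>m\<close> by adding one. Every cylindric
  partition has as many addable as removable boxes, and adding one box and removing another
  commute, so \<open>down \<circ> up = up \<circ> down\<close> holds exactly. Deleting the largest entry of a standard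
  tableau shows \<open>f\<^bsub>\<lambda>/\<mu>\<^esub> = (up\<^sup>N \<delta>\<^sub>\<mu>) \<lambda> = (down\<^sup>N \<delta>\<^sub>\<lambda>) \<mu>\<close> with \<open>N = |\<lambda>/\<mu>|\<close>. Hence with
  \<open>b = m - |\<alpha>/\<beta>|\<close> the left-hand side is \<open>(up\<^sup>b (down\<^sup>m \<delta>\<^sub>\<alpha>)) \<beta>\<close> and the right-hand side is
  \<open>(down\<^sup>m (up\<^sup>b \<delta>\<^sub>\<alpha>)) \<beta>\<close>.\<close>

locale cylinder =
  fixes k n :: nat
  assumes k_pos: "1 \<le> k" and k_less_n: "k < n"
begin

abbreviation cyl :: "(int \<Rightarrow> int) \<Rightarrow> bool" where "cyl \<equiv> cyl_partition k n"
abbreviation c :: int where "c \<equiv> int n - int k"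

lemma int_k_pos: "0 < int k"
  using k_pos by simp

lemma c_pos: "0 < c"
  using k_less_n by simp

lemma cyl_step_le: "cyl l \<Longrightarrow> l (x + 1) \<le> l x"
  unfolding cyl_partition_def by blast

lemma cyl_periodic: "cyl l \<Longrightarrow> l x = l (x + int k) + c"
  unfolding cyl_partition_def by blast

lemma cyl_shift:
  assumes "cyl l"
  shows "l (x + j * int k) = l x - j * c"
proof -
  have nat_shift: "l (x + int i * int k) = l x - int i * c" for x i
  proof (induction i arbitrary: x)
    case (Suc i)
    have "l (x + int (Suc i) * int k) = l ((x + int k) + int i * int k)"
      by (simp add: algebra_simps)
    also have "\<dots> = l (x + int k) - int i * c"
      by (rule Suc)
    finally show ?case
      using cyl_periodic[OF assms, of x] by (simp add: algebra_simps)
  qed simp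
  show ?thesis
  proof (cases "0 \<le> j")
    case True
    then show ?thesis using nat_shift[of x "nat j"] by simp
  next
    case False
    then show ?thesis using nat_shift[of "x + j * int k" "nat (- j)"] by (simp add: algebra_simps)
  qed
qed

lemma cyl_mod_add: "cyl l \<Longrightarrow> l (x + d) = l (x mod int k + d) - (x div int k) * c"
  using cyl_shift[of l "x mod int k + d" "x div int k"] by (simp add: algebra_simps)

lemma cyl_mod: "cyl l \<Longrightarrow> l x = l (x mod int k) - (x div int k) * c"
  using cyl_mod_add[of l x 0] by simp

lemma cyl_eqI:
  assumes "cyl l" "cyl m" "\<And>x. 0 \<le> x \<Longrightarrow> x < int k \<Longrightarrow> l x = m x"
  shows "l = m"
proof
  fix x
  have "0 \<le> x mod int k" "x mod int k < int k"
    using int_k_pos by auto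
  then show "l x = m x"
    using cyl_mod[OF assms(1), of x] cyl_mod[OF assms(2), of x] assms(3) by simp
qed

lemma cyl_antimono:
  assumes "cyl l" "x \<le> y"
  shows "l y \<le> l x"
proof -
  have "l (x + int i) \<le> l x" for i
  proof (induction i)
    case (Suc i)
    have "l (x + int (Suc i)) = l ((x + int i) + 1)"
      by (simp add: algebra_simps)
    then show ?case using Suc cyl_step_le[OF assms(1), of "x + int i"] by simp
  qed simp
  from this[of "nat (y - x)"] assms(2) show ?thesis by simp
qed

lemma cyl_inf:
  assumes "cyl l" "cyl m"
  shows "cyl (\<lambda>x. min (l x) (m x))"
  unfolding cyl_partition_def
proof (intro conjI allI)
  fix x
  show "min (l (x + 1)) (m (x + 1)) \<le> min (l x) (m x)"
    using cyl_step_le[OF assms(1), of x] cyl_step_le[OF assms(2), of x] by linarith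
  show "min (l x) (m x) = min (l (x + int k)) (m (x + int k)) + (int n - int k)"
    by (simp only: cyl_periodic[OF assms(1), of x] cyl_periodic[OF assms(2), of x] min_add_distrib_right)
qed

lemma cyl_sup:
  assumes "cyl l" "cyl m"
  shows "cyl (\<lambda>x. max (l x) (m x))"
  unfolding cyl_partition_def
proof (intro conjI allI)
  fix x
  show "max (l (x + 1)) (m (x + 1)) \<le> max (l x) (m x)"
    using cyl_step_le[OF assms(1), of x] cyl_step_le[OF assms(2), of x] by linarith
  show "max (l x) (m x) = max (l (x + int k)) (m (x + int k)) + (int n - int k)"
    by (simp only: cyl_periodic[OF assms(1), of x] cyl_periodic[OF assms(2), of x] max_add_distrib_right)
qed

subsection \<open>Adding and removing a box\<close>

text \<open>Raising all columns of residue \<open>r\<close> by one adds a single box, since a box is an orbit of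
  \<open>(x, y) \<mapsto> (x - k, y + n - k)\<close>.\<close>

definition residue_ind :: "nat \<Rightarrow> int \<Rightarrow> int" where
  "residue_ind r x = (if x mod int k = int r then 1 else 0)"

definition add_box :: "(int \<Rightarrow> int) \<Rightarrow> nat \<Rightarrow> int \<Rightarrow> int" where
  "add_box l r = (\<lambda>x. l x + residue_ind r x)"

definition remove_box :: "(int \<Rightarrow> int) \<Rightarrow> nat \<Rightarrow> int \<Rightarrow> int" where
  "remove_box l r = (\<lambda>x. l x - residue_ind r x)"

lemma residue_ind_periodic: "residue_ind r (x + int k) = residue_ind r x"
  by (simp add: residue_ind_def)

lemma residue_ind_nonneg: "0 \<le> residue_ind r x"
  by (simp add: residue_ind_def)

lemma residue_ind_self: "r < k \<Longrightarrow> residue_ind r (int r) = 1"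
  by (simp add: residue_ind_def)

lemma residue_ind_disjoint: "r \<noteq> s \<Longrightarrow> residue_ind r x = 0 \<or> residue_ind s x = 0"
  by (simp add: residue_ind_def)

lemma sum_residue_ind: "r < k \<Longrightarrow> (\<Sum>x\<in>{0..<int k}. residue_ind r x) = 1"
  by (simp add: residue_ind_def sum.If_cases Int_def)

lemma remove_add_box [simp]: "remove_box (add_box l r) r = l"
  and add_remove_box [simp]: "add_box (remove_box l r) r = l"
  and remove_box_add_box_commute: "remove_box (add_box l r) s = add_box (remove_box l s) r"
  by (auto simp: remove_box_def add_box_def)

lemma cyl_remove_box_iff:
  assumes l: "cyl l" and r: "r < k"
  shows "cyl (remove_box l r) \<longleftrightarrow> l (int r + 1) < l (int r)"
proof
  assume h: "cyl (remove_box l r)"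
  show "l (int r + 1) < l (int r)"
  proof (cases "k = 1")
    case True
    then show ?thesis using cyl_periodic[OF l, of "int r"] c_pos r by simp
  next
    case False
    have "(int r + 1) mod int k \<noteq> int r"
    proof (cases "r + 1 = k")
      case True
      then have "int r + 1 = int k" by simp
      then have "(int r + 1) mod int k = 0"
        by (simp only: mod_self)
      then show ?thesis using False True by simp
    qed (use r in auto)
    then have "residue_ind r (int r + 1) = 0"
      by (simp add: residue_ind_def)
    then show ?thesis
      using cyl_step_le[OF h, of "int r"] residue_ind_self[OF r] by (simp add: remove_box_def)
  qed
next
  assume h: "l (int r + 1) < l (int r)"
  show "cyl (remove_box l r)"
    unfolding cyl_partition_def
  proof (intro conjI allI)
    fix x
    show "remove_box l r x = remove_box l r (x + int k) + (int n - int k)"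
      using cyl_periodic[OF l, of x] residue_ind_periodic[of r x] by (simp add: remove_box_def)
    show "remove_box l r (x + 1) \<le> remove_box l r x"
    proof (cases "x mod int k = int r")
      case True
      then have "l (x + 1) < l x"
        using h cyl_mod_add[OF l, of x 1] cyl_mod[OF l, of x] by simp
      then show ?thesis
        using True residue_ind_nonneg[of r "x + 1"] by (simp add: remove_box_def residue_ind_def)
    next
      case False
      then show ?thesis
        using cyl_step_le[OF l, of x] residue_ind_nonneg[of r "x + 1"]
        by (simp add: remove_box_def residue_ind_def)
    qed
  qed
qed

lemma cyl_add_box_iff:
  assumes l: "cyl l" and r: "r < k"
  shows "cyl (add_box l r) \<longleftrightarrow> l (int r) < l (int r - 1)"
proof
  assume h: "cyl (add_box l r)"
  show "l (int r) < l (int r - 1)"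
  proof (cases "r = 0")
    case True
    have "residue_ind r (int r - 1) = (if k = 1 then 1 else 0)"
      using True k_pos by (simp add: residue_ind_def zmod_minus1)
    then show ?thesis
      using cyl_step_le[OF h, of "int r - 1"] residue_ind_self[OF r]
        cyl_periodic[OF l, of "int r - 1"] c_pos
      by (auto simp: add_box_def split: if_splits)
  next
    case False
    then have "residue_ind r (int r - 1) = 0"
      using r by (simp add: residue_ind_def)
    then show ?thesis
      using cyl_step_le[OF h, of "int r - 1"] residue_ind_self[OF r] by (simp add: add_box_def)
  qed
next
  assume h: "l (int r) < l (int r - 1)"
  show "cyl (add_box l r)"
    unfolding cyl_partition_def
  proof (intro conjI allI)
    fix x
    show "add_box l r x = add_box l r (x + int k) + (int n - int k)"
      using cyl_periodic[OF l, of x] residue_ind_periodic[of r x] by (simp add: add_box_def)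
    show "add_box l r (x + 1) \<le> add_box l r x"
    proof (cases "(x + 1) mod int k = int r")
      case True
      then have "l (x + 1) < l x"
        using h cyl_mod_add[OF l, of "x + 1" "-1"] cyl_mod[OF l, of "x + 1"] by simp
      then show ?thesis
        using True residue_ind_nonneg[of r x] by (simp add: add_box_def residue_ind_def)
    next
      case False
      then show ?thesis
        using cyl_step_le[OF l, of x] residue_ind_nonneg[of r x]
        by (simp add: add_box_def residue_ind_def)
    qed
  qed
qed

lemma subseteq_remove_box_iff:
  assumes l: "cyl l" and m: "cyl m" and le: "cyl_subseteq m l" and r: "r < k"
  shows "cyl_subseteq m (remove_box l r) \<longleftrightarrow> m (int r) < l (int r)"
proof
  assume "cyl_subseteq m (remove_box l r)"
  then show "m (int r) < l (int r)"
    using residue_ind_self[OF r] by (auto simp: cyl_subseteq_def remove_box_def dest: spec[of _ "int r"])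
next
  assume h: "m (int r) < l (int r)"
  have "m x \<le> l x - residue_ind r x" for x
  proof (cases "x mod int k = int r")
    case True
    then show ?thesis
      using h cyl_mod[OF l, of x] cyl_mod[OF m, of x] by (simp add: residue_ind_def)
  next
    case False
    then show ?thesis using le by (simp add: residue_ind_def cyl_subseteq_def)
  qed
  then show "cyl_subseteq m (remove_box l r)"
    by (simp add: cyl_subseteq_def remove_box_def)
qed

text \<open>For \<open>r \<noteq> s\<close>, \<open>add_box m r\<close> and \<open>remove_box m s\<close> are the join and meet of \<open>m\<close> and
  \<open>remove_box (add_box m r) s\<close>.\<close>

lemma cyl_add_remove_box_swap:
  assumes "r \<noteq> s" "cyl m"
  shows "(cyl (add_box m r) \<and> cyl (remove_box (add_box m r) s)) \<longleftrightarrow>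
         (cyl (remove_box m s) \<and> cyl (add_box (remove_box m s) r))"
proof -
  let ?p = "remove_box (add_box m r) s"
  have "add_box m r x = max (m x) (?p x) \<and> remove_box m s x = min (m x) (?p x)" for x
    using residue_ind_disjoint[OF assms(1), of x] residue_ind_nonneg[of r x] residue_ind_nonneg[of s x]
    by (auto simp: add_box_def remove_box_def)
  then have join: "add_box m r = (\<lambda>x. max (m x) (?p x))"
    and meet: "remove_box m s = (\<lambda>x. min (m x) (?p x))"
    unfolding fun_eq_iff by blast+
  have swap: "?p = add_box (remove_box m s) r"
    by (rule remove_box_add_box_commute)
  show ?thesis
  proof
    assume "cyl (add_box m r) \<and> cyl ?p"
    then have "cyl ?p" by blast
    moreover have "cyl (remove_box m s)"
      by (subst meet) (rule cyl_inf[OF assms(2) \<open>cyl ?p\<close>])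
    ultimately show "cyl (remove_box m s) \<and> cyl (add_box (remove_box m s) r)"
      unfolding swap by blast
  next
    assume "cyl (remove_box m s) \<and> cyl (add_box (remove_box m s) r)"
    then have "cyl ?p"
      unfolding swap by blast
    moreover have "cyl (add_box m r)"
      by (subst join) (rule cyl_sup[OF assms(2) \<open>cyl ?p\<close>])
    ultimately show "cyl (add_box m r) \<and> cyl ?p" by blast
  qed
qed

subsection \<open>The up and down operators\<close>

definition up :: "((int \<Rightarrow> int) \<Rightarrow> nat) \<Rightarrow> (int \<Rightarrow> int) \<Rightarrow> nat" where
  "up v l = (\<Sum>r<k. if cyl l \<and> cyl (remove_box l r) then v (remove_box l r) else 0)"

definition down :: "((int \<Rightarrow> int) \<Rightarrow> nat) \<Rightarrow> (int \<Rightarrow> int) \<Rightarrow> nat" where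
  "down v m = (\<Sum>r<k. if cyl m \<and> cyl (add_box m r) then v (add_box m r) else 0)"

text \<open>On a cylinder there are as many addable as removable boxes: column \<open>r\<close> is addable iff
  \<open>l r < l (r - 1)\<close> and removable iff \<open>l (r + 1) < l r\<close>, and by periodicity both conditions
  run over the same \<open>k\<close> consecutive differences.\<close>

lemma card_addable_eq_card_removable:
  assumes m: "cyl m"
  shows "(\<Sum>r<k. if cyl (add_box m r) then 1 else 0) = (\<Sum>r<k. if cyl (remove_box m r) then (1::nat) else 0)"
proof -
  define f where "f r = (if m (int r) < m (int r - 1) then (1::nat) else 0)" for r
  have "(\<Sum>r<k. if cyl (add_box m r) then 1 else 0) = (\<Sum>r<k. f r)"
    by (rule sum.cong) (auto simp: f_def cyl_add_box_iff[OF m])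
  also have "\<dots> = f 0 + (\<Sum>r<k. f (Suc r)) - f k"
    using sum.lessThan_Suc_shift[of f k] by simp
  also have "f k = f 0"
    using cyl_periodic[OF m, of 0] cyl_periodic[OF m, of "-1"] by (simp add: f_def)
  also have "(\<Sum>r<k. f (Suc r)) = (\<Sum>r<k. if cyl (remove_box m r) then 1 else 0)"
    by (rule sum.cong) (auto simp: f_def cyl_remove_box_iff[OF m] ac_simps)
  finally show ?thesis by simp
qed

lemma down_up_commute: "down (up v) m = up (down v) m"
proof (cases "cyl m")
  case False
  then show ?thesis by (simp add: up_def down_def)
next
  case m: True
  define g1 where "g1 r s = (if cyl (add_box m r) \<and> cyl (remove_box (add_box m r) s)
    then v (remove_box (add_box m r) s) else 0)" for r s
  define g2 where "g2 r s = (if cyl (remove_box m s) \<and> cyl (add_box (remove_box m s) r)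
    then v (add_box (remove_box m s) r) else 0)" for r s
  have split_diagonal: "(\<Sum>r<k. \<Sum>s<k. g r s) = (\<Sum>r<k. g r r) + (\<Sum>r<k. \<Sum>s\<in>{..<k} - {r}. g r s)"
    for g :: "nat \<Rightarrow> nat \<Rightarrow> nat"
    by (simp add: sum.distrib[symmetric] sum.remove)
  have diagonal1: "(\<Sum>r<k. g1 r r) = (\<Sum>r<k. if cyl (add_box m r) then 1 else 0) * v m"
    by (auto simp: g1_def sum_distrib_right m intro!: sum.cong)
  have diagonal2: "(\<Sum>r<k. g2 r r) = (\<Sum>r<k. if cyl (remove_box m r) then 1 else 0) * v m"
    by (auto simp: g2_def sum_distrib_right m intro!: sum.cong)
  have off_diagonal: "(\<Sum>r<k. \<Sum>s\<in>{..<k} - {r}. g1 r s) = (\<Sum>r<k. \<Sum>s\<in>{..<k} - {r}. g2 r s)"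
  proof (intro sum.cong refl)
    fix r s assume "s \<in> {..<k} - {r}"
    then show "g1 r s = g2 r s"
      using cyl_add_remove_box_swap[of r s, OF _ m] unfolding g1_def g2_def remove_box_add_box_commute
      by auto
  qed
  have "down (up v) m = (\<Sum>r<k. \<Sum>s<k. g1 r s)"
    unfolding down_def up_def g1_def using m by (intro sum.cong) auto
  also have "\<dots> = (\<Sum>r<k. \<Sum>s<k. g2 r s)"
    unfolding split_diagonal diagonal1 diagonal2 off_diagonal card_addable_eq_card_removable[OF m] ..
  also have "\<dots> = up (down v) m"
    unfolding down_def up_def g2_def using m by (subst sum.swap) (intro sum.cong, auto)
  finally show ?thesis .
qed

lemma down_pow_up_pow_commute: "(down ^^ a) ((up ^^ b) v) = (up ^^ b) ((down ^^ a) v)"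
proof -
  have down_up_pow: "down ((up ^^ b) v) = (up ^^ b) (down v)" for v
  proof (induction b)
    case (Suc b)
    have "down ((up ^^ Suc b) v) = up (down ((up ^^ b) v))"
      by (simp add: fun_eq_iff down_up_commute)
    then show ?case by (simp add: Suc)
  qed simp
  show ?thesis
    by (induction a arbitrary: v) (simp_all add: down_up_pow funpow_Suc_right del: funpow.simps)
qed

definition words :: "nat \<Rightarrow> nat list set" where
  "words a = {w. set w \<subseteq> {..<k} \<and> length w = a}"

definition add_word :: "(int \<Rightarrow> int) \<Rightarrow> nat list \<Rightarrow> int \<Rightarrow> int" where
  "add_word m w = (\<lambda>x. m x + (\<Sum>r\<leftarrow>w. residue_ind r x))"

definition remove_word :: "(int \<Rightarrow> int) \<Rightarrow> nat list \<Rightarrow> int \<Rightarrow> int" where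
  "remove_word l w = (\<lambda>x. l x - (\<Sum>r\<leftarrow>w. residue_ind r x))"

fun cyl_chain :: "(int \<Rightarrow> int) \<Rightarrow> nat list \<Rightarrow> bool" where
  "cyl_chain m [] = cyl m"
| "cyl_chain m (r # w) = (cyl m \<and> cyl_chain (add_box m r) w)"

definition delta :: "(int \<Rightarrow> int) \<Rightarrow> (int \<Rightarrow> int) \<Rightarrow> nat" where
  "delta m = (\<lambda>l. if l = m then 1 else 0)"

lemma finite_words: "finite (words a)"
  unfolding words_def by (rule finite_lists_length_eq) simp

lemma words_0: "words 0 = {[]}"
  by (auto simp: words_def)

lemma sum_words_Suc: "(\<Sum>w\<in>words (Suc a). g w) = (\<Sum>r<k. \<Sum>w\<in>words a. g (r # w))"
proof -
  have "words (Suc a) = (\<lambda>(w, r). r # w) ` (words a \<times> {..<k})"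
    unfolding words_def by (rule lists_length_Suc_eq)
  moreover have "inj_on (\<lambda>(w, r). r # w) (words a \<times> {..<k})"
    by (auto simp: inj_on_def)
  ultimately have "(\<Sum>w\<in>words (Suc a). g w) = (\<Sum>w\<in>words a. \<Sum>r<k. g (r # w))"
    by (simp add: sum.reindex sum.cartesian_product split_def)
  then show ?thesis by (simp add: sum.swap[of _ "words a"])
qed

lemma add_word_Nil [simp]: "add_word m [] = m"
  and remove_word_Nil [simp]: "remove_word l [] = l"
  and add_word_Cons: "add_word m (r # w) = add_word (add_box m r) w"
  and remove_word_Cons: "remove_word l (r # w) = remove_box (remove_word l w) r"
  and add_remove_word [simp]: "add_word (remove_word l w) w = l"
  and remove_add_word [simp]: "remove_word (add_word m w) w = m"
  by (auto simp: add_word_def remove_word_def add_box_def remove_box_def)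

lemma remove_word_eq_iff: "remove_word l w = m \<longleftrightarrow> add_word m w = l"
  by (auto simp: add_word_def remove_word_def)

lemma le_add_word: "m x \<le> add_word m w x"
  by (induction w) (auto simp: add_word_def residue_ind_def)

lemma cyl_chain_cyl: "cyl_chain m w \<Longrightarrow> cyl m"
  by (cases w) auto

lemma cyl_chain_cyl_add_word: "cyl_chain m w \<Longrightarrow> cyl (add_word m w)"
  by (induction w arbitrary: m) (auto simp: add_word_Cons)

lemma down_pow_expand:
  assumes "cyl m"
  shows "(down ^^ a) v m = (\<Sum>w\<in>words a. if cyl_chain m w then v (add_word m w) else 0)"
  using assms
proof (induction a arbitrary: m)
  case (Suc a)
  have "(down ^^ Suc a) v m = down ((down ^^ a) v) m"
    by simp
  also have "\<dots> = (\<Sum>r<k. if cyl (add_box m r) then (\<Sum>w\<in>words a. if cyl_chain (add_box m r) w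
        then v (add_word (add_box m r) w) else 0) else 0)"
    unfolding down_def[of "(down ^^ a) v" m] using Suc by (intro sum.cong) auto
  also have "\<dots> = (\<Sum>r<k. \<Sum>w\<in>words a. if cyl_chain m (r # w) then v (add_word m (r # w)) else 0)"
    using Suc.prems by (intro sum.cong refl)
      (auto simp: add_word_Cons dest: cyl_chain_cyl intro!: sum.neutral cong: if_cong)
  also have "\<dots> = (\<Sum>w\<in>words (Suc a). if cyl_chain m w then v (add_word m w) else 0)"
    by (rule sum_words_Suc[symmetric])
  finally show ?case .
qed (simp add: words_0)

lemma up_pow_expand:
  assumes "cyl l"
  shows "(up ^^ b) v l = (\<Sum>w\<in>words b. if cyl_chain (remove_word l w) w then v (remove_word l w) else 0)"
proof (induction b arbitrary: v)
  case (Suc b)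
  have "(up ^^ Suc b) v l = (up ^^ b) (up v) l"
    by (simp add: funpow_Suc_right del: funpow.simps)
  also have "\<dots> = (\<Sum>w\<in>words b. if cyl_chain (remove_word l w) w then up v (remove_word l w) else 0)"
    by (rule Suc)
  also have "\<dots> = (\<Sum>w\<in>words b. \<Sum>r<k. if cyl_chain (remove_word l (r # w)) (r # w)
      then v (remove_word l (r # w)) else 0)"
  proof (intro sum.cong refl)
    fix w
    show "(if cyl_chain (remove_word l w) w then up v (remove_word l w) else 0) =
        (\<Sum>r<k. if cyl_chain (remove_word l (r # w)) (r # w) then v (remove_word l (r # w)) else 0)"
      unfolding up_def remove_word_Cons by (auto dest: cyl_chain_cyl intro!: sum.cong)
  qed
  also have "\<dots> = (\<Sum>w\<in>words (Suc b). if cyl_chain (remove_word l w) w then v (remove_word l w) else 0)"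
    by (simp add: sum_words_Suc sum.swap[of _ "{..<k}"])
  finally show ?case .
qed (simp add: assms words_0)

definition skew_size :: "(int \<Rightarrow> int) \<Rightarrow> (int \<Rightarrow> int) \<Rightarrow> int" where
  "skew_size l m = (\<Sum>x\<in>{0..<int k}. l x - m x)"

text \<open>One representative of each box of \<open>l/m\<close>: the points in the columns \<open>0, \<dots>, k - 1\<close>.\<close>

definition skew_cells :: "(int \<Rightarrow> int) \<Rightarrow> (int \<Rightarrow> int) \<Rightarrow> (int \<times> int) set" where
  "skew_cells l m = Sigma {0..<int k} (\<lambda>x. {m x<..l x})"

lemma mem_box_iff: "q \<in> box k n p \<longleftrightarrow> (\<exists>j. q = (fst p - j * int k, snd p + j * c))"
  by (auto simp: box_def)

lemma mem_box_self: "p \<in> box k n p"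
  unfolding mem_box_iff by (rule exI[of _ 0]) simp

lemma box_shift: "box k n (x - j * int k, y + j * c) = box k n (x, y)"
proof -
  have "(\<exists>i. q = (x - j * int k - i * int k, y + j * c + i * c)) \<longleftrightarrow>
      (\<exists>i. q = (x - i * int k, y + i * c))" for q
  proof
    assume "\<exists>i. q = (x - j * int k - i * int k, y + j * c + i * c)"
    then obtain i where "q = (x - j * int k - i * int k, y + j * c + i * c)" ..
    then show "\<exists>i. q = (x - i * int k, y + i * c)"
      by (intro exI[of _ "j + i"]) (simp add: algebra_simps)
  next
    assume "\<exists>i. q = (x - i * int k, y + i * c)"
    then obtain i where "q = (x - i * int k, y + i * c)" ..
    then show "\<exists>i. q = (x - j * int k - i * int k, y + j * c + i * c)"
      by (intro exI[of _ "i - j"]) (simp add: algebra_simps)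
  qed
  then show ?thesis
    by (simp add: set_eq_iff mem_box_iff)
qed

lemma box_eq_iff: "box k n p = box k n q \<longleftrightarrow> q \<in> box k n p"
proof
  assume "q \<in> box k n p"
  then obtain j where "q = (fst p - j * int k, snd p + j * c)"
    by (auto simp: mem_box_iff)
  then show "box k n p = box k n q"
    using box_shift[of "fst p" j "snd p"] by simp
qed (use mem_box_self in blast)

lemma mem_skew_points_iff: "(x, y) \<in> skew_points l m \<longleftrightarrow> m x < y \<and> y \<le> l x"
  by (auto simp: skew_points_def in_part_def)

lemma box_in_skew_boxes: "p \<in> skew_points l m \<Longrightarrow> box k n p \<in> skew_boxes k n l m"
  by (simp add: skew_boxes_def)

lemma skew_points_box_closed:
  assumes "cyl l" "cyl m" "p \<in> skew_points l m" "q \<in> box k n p"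
  shows "q \<in> skew_points l m"
proof -
  obtain j where "q = (fst p - j * int k, snd p + j * c)"
    using assms(4) by (auto simp: mem_box_iff)
  then show ?thesis
    using assms(3) cyl_shift[OF assms(1), of "fst p" "- j"] cyl_shift[OF assms(2), of "fst p" "- j"]
    by (cases p) (simp add: mem_skew_points_iff)
qed

lemma skew_boxes_eq_image_skew_cells:
  assumes "cyl l" "cyl m"
  shows "skew_boxes k n l m = box k n ` skew_cells l m"
proof
  show "box k n ` skew_cells l m \<subseteq> skew_boxes k n l m"
    unfolding skew_boxes_def skew_cells_def by (auto simp: mem_skew_points_iff)
  show "skew_boxes k n l m \<subseteq> box k n ` skew_cells l m"
  proof
    fix b assume "b \<in> skew_boxes k n l m"
    then obtain x y where p: "(x, y) \<in> skew_points l m" and b: "b = box k n (x, y)"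
      unfolding skew_boxes_def by auto
    let ?q = "(x mod int k, y + (x div int k) * c)"
    have q: "?q \<in> box k n (x, y)"
      unfolding mem_box_iff by (rule exI[of _ "x div int k"]) (simp add: minus_div_mult_eq_mod)
    then have "?q \<in> skew_cells l m"
      using skew_points_box_closed[OF assms p q] int_k_pos by (simp add: skew_cells_def mem_skew_points_iff)
    moreover have "b = box k n ?q"
      using q b box_eq_iff by blast
    ultimately show "b \<in> box k n ` skew_cells l m" by blast
  qed
qed

lemma inj_on_box_skew_cells: "inj_on (box k n) (skew_cells l m)"
proof
  fix p q assume p: "p \<in> skew_cells l m" and q: "q \<in> skew_cells l m" and "box k n p = box k n q"
  then obtain j where j: "q = (fst p - j * int k, snd p + j * c)"
    by (auto simp: box_eq_iff mem_box_iff)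
  have "fst q mod int k = fst p mod int k"
    using j by (simp add: mod_eq_dvd_iff)
  moreover have "fst q mod int k = fst q" "fst p mod int k = fst p"
    using p q by (auto simp: skew_cells_def)
  ultimately have "fst q = fst p"
    by simp
  then have "j = 0"
    using j int_k_pos by simp
  then show "p = q"
    using j by (cases p) simp
qed

lemma finite_skew_boxes: "cyl l \<Longrightarrow> cyl m \<Longrightarrow> finite (skew_boxes k n l m)"
  by (simp add: skew_boxes_eq_image_skew_cells skew_cells_def)

lemma card_skew_boxes:
  assumes "cyl l" "cyl m" "cyl_subseteq m l"
  shows "int (card (skew_boxes k n l m)) = skew_size l m"
proof -
  have "card (skew_boxes k n l m) = card (skew_cells l m)"
    by (simp add: skew_boxes_eq_image_skew_cells[OF assms(1,2)] card_image inj_on_box_skew_cells)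
  also have "\<dots> = (\<Sum>x\<in>{0..<int k}. nat (l x - m x))"
    unfolding skew_cells_def by (subst card_SigmaI) auto
  finally show ?thesis
    using assms(3) by (simp add: skew_size_def cyl_subseteq_def)
qed

lemma skew_size_split: "skew_size l m = skew_size l p + skew_size p m"
  by (simp add: skew_size_def sum.distrib[symmetric])

lemma skew_size_add_word:
  assumes "w \<in> words a"
  shows "skew_size (add_word m w) m = int a"
proof -
  have "set w \<subseteq> {..<k} \<Longrightarrow> (\<Sum>x\<in>{0..<int k}. \<Sum>r\<leftarrow>w. residue_ind r x) = int (length w)"
    by (induction w) (auto simp: sum.distrib sum_residue_ind)
  then show ?thesis
    using assms by (simp add: words_def skew_size_def add_word_def)
qed

lemma skew_size_eq_0_imp_eq:
  assumes "cyl l" "cyl m" "cyl_subseteq m l" "skew_size l m = 0"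
  shows "l = m"
proof (rule cyl_eqI[OF assms(1,2)])
  fix x :: int assume "0 \<le> x" "x < int k"
  then show "l x = m x"
    using assms(3,4) sum_nonneg_eq_0_iff[of "{0..<int k}" "\<lambda>x. l x - m x"]
    by (auto simp: skew_size_def cyl_subseteq_def)
qed

lemma finite_cyl_between: "finite {m. cyl m \<and> (\<forall>x\<in>{0..<int k}. a x \<le> m x \<and> m x \<le> b x)}"
  (is "finite ?A")
proof -
  have inj: "inj_on (\<lambda>m. restrict m {0..<int k}) ?A"
  proof
    fix m1 m2 assume "m1 \<in> ?A" "m2 \<in> ?A" "restrict m1 {0..<int k} = restrict m2 {0..<int k}"
    then show "m1 = m2"
      by (intro cyl_eqI) (auto dest: fun_cong[where x=x for x] simp: restrict_def split: if_splits)
  qed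
  have "(\<lambda>m. restrict m {0..<int k}) ` ?A \<subseteq> PiE {0..<int k} (\<lambda>x. {a x..b x})"
    by auto
  moreover have "finite (PiE {0..<int k} (\<lambda>x. {a x..b x}))" by (intro finite_PiE) auto
  ultimately have "finite ((\<lambda>m. restrict m {0..<int k}) ` ?A)" by (rule finite_subset)
  then show ?thesis using inj finite_imageD by blast
qed

subsection \<open>Standard tableaux\<close>

lemma standard_tableau_iff:
  assumes "finite (skew_boxes k n l m)"
  shows "standard_tableau k n l m R \<longleftrightarrow>
    R \<in> skew_boxes k n l m \<rightarrow>\<^sub>E {1..card (skew_boxes k n l m)} \<and>
    bij_betw R (skew_boxes k n l m) {1..card (skew_boxes k n l m)} \<and> semistandard k n l m R"
  unfolding standard_tableau_def by (metis bij_betw_same_card card_atLeastAtMost diff_Suc_1)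

lemma finite_standard_tableaux:
  assumes "finite (skew_boxes k n l m)"
  shows "finite {R. standard_tableau k n l m R}"
proof (rule finite_subset)
  show "{R. standard_tableau k n l m R} \<subseteq> skew_boxes k n l m \<rightarrow>\<^sub>E {1..card (skew_boxes k n l m)}"
    using standard_tableau_iff[OF assms] by blast
  show "finite (skew_boxes k n l m \<rightarrow>\<^sub>E {1..card (skew_boxes k n l m)})"
    using assms by (intro finite_PiE) auto
qed

lemma num_syt_self: "num_syt k n m m = 1"
proof -
  have "skew_boxes k n m m = {}"
    by (auto simp: skew_boxes_def skew_points_def)
  moreover have "semistandard k n m m R" for R :: "(int \<times> int) set \<Rightarrow> nat"
    by (simp add: semistandard_def skew_points_def)
  ultimately have "{R. standard_tableau k n m m R} = {\<lambda>_. undefined}"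
    by (auto simp: standard_tableau_def bij_betw_def)
  then show ?thesis
    by (simp add: num_syt_def)
qed

lemma semistandard_restrict:
  assumes "skew_points l' m' \<subseteq> skew_points l m" "\<forall>p\<in>skew_points l' m'. R' (box k n p) = R (box k n p)"
    and "semistandard k n l m R"
  shows "semistandard k n l' m' R'"
  using assms unfolding semistandard_def subset_iff by (metis (no_types, lifting))

definition corner :: "(int \<Rightarrow> int) \<Rightarrow> nat \<Rightarrow> (int \<times> int) set" where
  "corner l r = box k n (int r, l (int r))"

lemma mem_corner_iff:
  assumes l: "cyl l" and r: "r < k"
  shows "(x, y) \<in> corner l r \<longleftrightarrow> x mod int k = int r \<and> y = l x"
proof
  assume "(x, y) \<in> corner l r"
  then obtain j where x: "x = int r - j * int k" and y: "y = l (int r) + j * c"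
    unfolding corner_def mem_box_iff by auto
  have "x mod int k = int r mod int k"
    by (simp add: x mod_eq_dvd_iff)
  then have "x mod int k = int r"
    using r by simp
  moreover have "l x = y"
    using cyl_shift[OF l, of "int r" "- j"] by (simp add: x y)
  ultimately show "x mod int k = int r \<and> y = l x" by simp
next
  assume h: "x mod int k = int r \<and> y = l x"
  then have "x = int r + x div int k * int k"
    using div_mult_mod_eq[of x "int k"] by simp
  moreover have "y = l (int r) - x div int k * c"
    using cyl_mod[OF l, of x] h by simp
  ultimately show "(x, y) \<in> corner l r"
    unfolding corner_def mem_box_iff by (intro exI[of _ "- (x div int k)"]) simp
qed

lemma corner_eq_box: "p \<in> corner l r \<Longrightarrow> box k n p = corner l r"
  unfolding corner_def using box_eq_iff by metis

lemma corner_inj: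
  assumes "cyl l" "r < k" "s < k" "corner l r = corner l s"
  shows "r = s"
proof -
  have "(int s, l (int s)) \<in> corner l r"
    using assms(4) mem_box_self by (simp add: corner_def)
  then show ?thesis
    using mem_corner_iff[OF assms(1,2)] assms(3) by simp
qed

lemma corner_maximal:
  assumes l: "cyl l" and r: "r < k" and removable: "cyl (remove_box l r)"
    and corner: "(x, y) \<in> corner l r"
  shows "(x, y') \<in> skew_points l m \<Longrightarrow> y' \<le> y"
    and "(x', y) \<in> skew_points l m \<Longrightarrow> x' \<le> x"
proof -
  have x: "x mod int k = int r" and y: "y = l x"
    using corner mem_corner_iff[OF l r] by auto
  show "(x, y') \<in> skew_points l m \<Longrightarrow> y' \<le> y"
    by (simp add: y mem_skew_points_iff)
  have "l (x + 1) < l x"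
    using removable cyl_remove_box_iff[OF l r] cyl_mod_add[OF l, of x 1] cyl_mod[OF l, of x] x by simp
  then show "(x', y) \<in> skew_points l m \<Longrightarrow> x' \<le> x"
    using cyl_antimono[OF l, of "x + 1" x'] by (force simp: y mem_skew_points_iff)
qed

lemma skew_points_remove_box:
  assumes "cyl l" "r < k"
  shows "skew_points (remove_box l r) m = skew_points l m - corner l r"
  by (auto simp: remove_box_def residue_ind_def mem_skew_points_iff mem_corner_iff[OF assms]
      skew_points_def in_part_def)

lemma skew_boxes_remove_box:
  assumes "cyl l" "r < k"
  shows "skew_boxes k n (remove_box l r) m = skew_boxes k n l m - {corner l r}"
proof -
  have "box k n ` (skew_points l m - corner l r) = box k n ` skew_points l m - {corner l r}"
  proof
    show "box k n ` (skew_points l m - corner l r) \<subseteq> box k n ` skew_points l m - {corner l r}"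
      using mem_box_self by (auto simp: corner_def box_eq_iff)
    show "box k n ` skew_points l m - {corner l r} \<subseteq> box k n ` (skew_points l m - corner l r)"
      using corner_eq_box by blast
  qed
  then show ?thesis
    unfolding skew_boxes_def skew_points_remove_box[OF assms] .
qed

lemma semistandard_extend_corner:
  assumes l: "cyl l" and r: "r < k" and removable: "cyl (remove_box l r)"
    and R'_le: "\<And>p. p \<in> skew_points (remove_box l r) m \<Longrightarrow> R' (box k n p) \<le> N"
    and R'_semi: "semistandard k n (remove_box l r) m R'"
  shows "semistandard k n l m (R'(corner l r := Suc N))"
proof -
  let ?R = "R'(corner l r := Suc N)"
  have cases: "(p \<in> corner l r \<and> ?R (box k n p) = Suc N) \<or>
      (p \<in> skew_points (remove_box l r) m \<and> ?R (box k n p) = R' (box k n p) \<and> R' (box k n p) \<le> N)"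
    if "p \<in> skew_points l m" for p
  proof (cases "p \<in> corner l r")
    case True
    then show ?thesis using corner_eq_box by simp
  next
    case False
    then have "box k n p \<noteq> corner l r"
      using mem_box_self by metis
    moreover have "p \<in> skew_points (remove_box l r) m"
      using that False skew_points_remove_box[OF l r] by blast
    ultimately show ?thesis
      using R'_le by simp
  qed
  show ?thesis
    unfolding semistandard_def
  proof (intro conjI allI impI)
    fix x y1 y2 assume "(x, y1) \<in> skew_points l m \<and> (x, y2) \<in> skew_points l m \<and> y1 < y2"
    then show "?R (box k n (x, y1)) \<le> ?R (box k n (x, y2))"
      using cases[of "(x, y1)"] cases[of "(x, y2)"] corner_maximal(1)[OF l r removable, of x y1 y2 m]
        R'_semi unfolding semistandard_def by fastforce
  next
    fix x1 x2 y assume "(x1, y) \<in> skew_points l m \<and> (x2, y) \<in> skew_points l m \<and> x1 < x2"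
    then show "?R (box k n (x1, y)) < ?R (box k n (x2, y))"
      using cases[of "(x1, y)"] cases[of "(x2, y)"] corner_maximal(2)[OF l r removable, of x1 y x2 m]
        R'_semi unfolding semistandard_def by fastforce
  qed
qed

lemma max_entry_position:
  assumes m: "cyl m" and semi: "semistandard k n l m R" and inj: "inj_on R (skew_boxes k n l m)"
    and max: "\<And>q. q \<in> skew_points l m \<Longrightarrow> R (box k n q) \<le> R (box k n (x, y))"
    and p: "(x, y) \<in> skew_points l m"
  shows "y = l x" and "l (x + 1) < l x"
proof -
  show y: "y = l x"
  proof (rule ccontr)
    assume "y \<noteq> l x"
    then have q: "(x, y + 1) \<in> skew_points l m"
      using p by (simp add: mem_skew_points_iff)
    moreover have "R (box k n (x, y)) \<le> R (box k n (x, y + 1))"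
      using semi p q unfolding semistandard_def by simp
    ultimately have "R (box k n (x, y + 1)) = R (box k n (x, y))"
      using max[OF q] by simp
    then have "box k n (x, y + 1) = box k n (x, y)"
      using inj box_in_skew_boxes[OF p] box_in_skew_boxes[OF q] by (auto dest: inj_onD)
    then obtain j where "x = x - j * int k" "y = y + 1 + j * c"
      by (auto simp: box_eq_iff mem_box_iff)
    then show False
      using int_k_pos by simp
  qed
  show "l (x + 1) < l x"
  proof (rule ccontr)
    assume "\<not> l (x + 1) < l x"
    then have q: "(x + 1, y) \<in> skew_points l m"
      using p y cyl_step_le[OF m, of x] by (simp add: mem_skew_points_iff)
    then have "R (box k n (x, y)) < R (box k n (x + 1, y))"
      using semi p unfolding semistandard_def by simp
    then show False
      using max[OF q] by simp
  qed
qed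

context
  fixes l m :: "int \<Rightarrow> int" and N :: nat
  assumes l: "cyl l" and m: "cyl m" and m_le_l: "cyl_subseteq m l"
    and card_Suc: "card (skew_boxes k n l m) = Suc N"
begin

lemma standard_tableau_Suc_iff:
  "standard_tableau k n l m R \<longleftrightarrow> R \<in> skew_boxes k n l m \<rightarrow>\<^sub>E {1..Suc N} \<and>
    bij_betw R (skew_boxes k n l m) {1..Suc N} \<and> semistandard k n l m R"
  using standard_tableau_iff[OF finite_skew_boxes[OF l m]] card_Suc by simp

lemma skew_boxes_remove_corner:
  assumes r: "r < k" and "cyl_subseteq m (remove_box l r)"
  shows "corner l r \<in> skew_boxes k n l m"
    and "card (skew_boxes k n (remove_box l r) m) = N"
proof -
  have "m (int r) < l (int r)"
    using assms subseteq_remove_box_iff[OF l m m_le_l r] by simp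
  then show corner: "corner l r \<in> skew_boxes k n l m"
    unfolding corner_def by (intro box_in_skew_boxes) (simp add: mem_skew_points_iff)
  show "card (skew_boxes k n (remove_box l r) m) = N"
    using corner card_Suc finite_skew_boxes[OF l m] by (simp add: skew_boxes_remove_box[OF l r])
qed

lemma max_entry_at_corner:
  assumes R: "standard_tableau k n l m R"
  obtains r where "r < k" "cyl (remove_box l r)" "cyl_subseteq m (remove_box l r)"
    "R (corner l r) = Suc N"
proof -
  let ?S = "skew_boxes k n l m"
  have R_PiE: "R \<in> ?S \<rightarrow>\<^sub>E {1..Suc N}" and R_bij: "bij_betw R ?S {1..Suc N}"
    and R_semi: "semistandard k n l m R"
    using R unfolding standard_tableau_Suc_iff by blast+
  have "Suc N \<in> R ` ?S"
    using R_bij by (simp add: bij_betw_def)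
  then obtain x y where p: "(x, y) \<in> skew_points l m" and R_xy: "R (box k n (x, y)) = Suc N"
    unfolding skew_boxes_def by auto
  have "R (box k n q) \<le> R (box k n (x, y))" if "q \<in> skew_points l m" for q
    using R_PiE box_in_skew_boxes[OF that] R_xy by auto
  then have y: "y = l x" and step: "l (x + 1) < l x"
    using max_entry_position[OF m R_semi _ _ p] R_bij by (auto simp: bij_betw_def)
  define r where "r = nat (x mod int k)"
  have r: "r < k" "int r = x mod int k"
    using int_k_pos by (auto simp: r_def nat_less_iff)
  have "cyl (remove_box l r)"
    using step r cyl_remove_box_iff[OF l r(1)] cyl_mod_add[OF l, of x 1] cyl_mod[OF l, of x] by simp
  moreover have "m (int r) < l (int r)"
    using p y r cyl_mod[OF m, of x] cyl_mod[OF l, of x] by (simp add: mem_skew_points_iff)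
  then have "cyl_subseteq m (remove_box l r)"
    using subseteq_remove_box_iff[OF l m m_le_l r(1)] by simp
  moreover have "corner l r = box k n (x, y)"
    using corner_eq_box mem_corner_iff[OF l r(1)] r y by metis
  ultimately show thesis
    using that r R_xy by simp
qed

lemma standard_tableau_restrict_corner:
  assumes r: "r < k" and removable: "cyl_subseteq m (remove_box l r)"
    and R: "standard_tableau k n l m R" and R_corner: "R (corner l r) = Suc N"
  shows "standard_tableau k n (remove_box l r) m (restrict R (skew_boxes k n l m - {corner l r}))"
proof -
  let ?S = "skew_boxes k n l m - {corner l r}"
  have R_bij: "bij_betw R (skew_boxes k n l m) {1..Suc N}" and R_semi: "semistandard k n l m R"
    using R unfolding standard_tableau_Suc_iff by blast+
  have S: "skew_boxes k n (remove_box l r) m = ?S"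
    by (rule skew_boxes_remove_box[OF l r])
  have "bij_betw R ?S ({1..Suc N} - {Suc N})"
    using R_corner skew_boxes_remove_corner(1)[OF r removable]
    by (intro bij_betw_DiffI[OF R_bij]) auto
  moreover have "{1..Suc N} - {Suc N} = {1..N}"
    by auto
  ultimately have bij: "bij_betw R ?S {1..N}"
    by simp
  then have "restrict R ?S \<in> ?S \<rightarrow>\<^sub>E {1..N}"
    by (simp add: restrict_PiE_iff bij_betw_imp_funcset)
  moreover have "semistandard k n (remove_box l r) m (restrict R ?S)"
  proof (rule semistandard_restrict[OF _ _ R_semi])
    show "skew_points (remove_box l r) m \<subseteq> skew_points l m"
      using skew_points_remove_box[OF l r] by blast
    show "\<forall>p\<in>skew_points (remove_box l r) m. restrict R ?S (box k n p) = R (box k n p)"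
      using box_in_skew_boxes[of _ "remove_box l r" m] by (simp add: S)
  qed
  ultimately show ?thesis
    using bij unfolding standard_tableau_def S by (blast intro: bij_betw_restrict_eq[THEN iffD2])
qed

lemma standard_tableau_extend_corner:
  assumes r: "r < k" and removable: "cyl (remove_box l r)" "cyl_subseteq m (remove_box l r)"
    and R': "standard_tableau k n (remove_box l r) m R'"
  shows "standard_tableau k n l m (R'(corner l r := Suc N))"
proof -
  let ?R = "R'(corner l r := Suc N)"
  let ?S = "skew_boxes k n l m"
  have S: "skew_boxes k n (remove_box l r) m = ?S - {corner l r}"
    by (rule skew_boxes_remove_box[OF l r])
  have corner: "corner l r \<in> ?S" and card_N: "card (?S - {corner l r}) = N"
    using skew_boxes_remove_corner[OF r removable(2)] by (simp_all add: S)
  have R'_PiE: "R' \<in> ?S - {corner l r} \<rightarrow>\<^sub>E {1..N}"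
    and R'_bij: "bij_betw R' (?S - {corner l r}) {1..N}"
    and R'_semi: "semistandard k n (remove_box l r) m R'"
    using R' standard_tableau_iff[OF finite_skew_boxes[OF removable(1) m]] card_N by (simp_all add: S)
  have "R' \<in> ?S - {corner l r} \<rightarrow>\<^sub>E {1..Suc N}"
    using R'_PiE PiE_mono[of _ "\<lambda>_. {1..N}" "\<lambda>_. {1..Suc N}"] by auto
  then have "?R \<in> insert (corner l r) (?S - {corner l r}) \<rightarrow>\<^sub>E {1..Suc N}"
    by (intro PiE_fun_upd) auto
  then have PiE: "?R \<in> ?S \<rightarrow>\<^sub>E {1..Suc N}"
    using corner by (simp add: insert_absorb)
  have "bij_betw ?R ((?S - {corner l r}) \<union> {corner l r}) ({1..N} \<union> {Suc N})"
  proof (rule bij_betw_combine)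
    show "bij_betw ?R (?S - {corner l r}) {1..N}"
      using R'_bij by (subst bij_betw_cong[where g = R']) auto
  qed auto
  moreover have "(?S - {corner l r}) \<union> {corner l r} = ?S" "{1..N} \<union> {Suc N} = {1..Suc N}"
    using corner by auto
  ultimately have bij: "bij_betw ?R ?S {1..Suc N}"
    by simp
  moreover have "semistandard k n l m ?R"
  proof (rule semistandard_extend_corner[OF l r removable(1) _ R'_semi])
    fix p assume "p \<in> skew_points (remove_box l r) m"
    then have "box k n p \<in> ?S - {corner l r}"
      using box_in_skew_boxes S by metis
    then show "R' (box k n p) \<le> N"
      using PiE_mem[OF R'_PiE] by auto
  qed
  ultimately show ?thesis
    using PiE by (simp add: standard_tableau_Suc_iff)
qed

lemma card_standard_tableaux_max_at_corner:
  assumes r: "r < k" and removable: "cyl (remove_box l r)" "cyl_subseteq m (remove_box l r)"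
  shows "card {R. standard_tableau k n l m R \<and> R (corner l r) = Suc N} = num_syt k n (remove_box l r) m"
proof -
  let ?S = "skew_boxes k n l m - {corner l r}"
  have S: "skew_boxes k n (remove_box l r) m = ?S"
    by (rule skew_boxes_remove_box[OF l r])
  have "bij_betw (\<lambda>R. restrict R ?S) {R. standard_tableau k n l m R \<and> R (corner l r) = Suc N}
      {R'. standard_tableau k n (remove_box l r) m R'}"
  proof (rule bij_betw_byWitness[where f' = "\<lambda>R'. R'(corner l r := Suc N)"])
    show "\<forall>R\<in>{R. standard_tableau k n l m R \<and> R (corner l r) = Suc N}.
        (restrict R ?S)(corner l r := Suc N) = R"
    proof (intro ballI ext)
      fix R b assume "R \<in> {R. standard_tableau k n l m R \<and> R (corner l r) = Suc N}"
      then have R: "standard_tableau k n l m R" and R_corner: "R (corner l r) = Suc N"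
        by simp_all
      have "R \<in> skew_boxes k n l m \<rightarrow>\<^sub>E {1..Suc N}"
        using R unfolding standard_tableau_Suc_iff by blast
      then show "((restrict R ?S)(corner l r := Suc N)) b = R b"
      proof (cases "b \<in> skew_boxes k n l m")
        case True
        then show ?thesis
          using R_corner by (cases "b = corner l r") simp_all
      next
        case False
        then have "b \<noteq> corner l r"
          using skew_boxes_remove_corner(1)[OF r removable(2)] by blast
        with False show ?thesis
          using PiE_arb[OF \<open>R \<in> skew_boxes k n l m \<rightarrow>\<^sub>E {1..Suc N}\<close>] by simp
      qed
    qed
    show "\<forall>R'\<in>{R'. standard_tableau k n (remove_box l r) m R'}. restrict (R'(corner l r := Suc N)) ?S = R'"
    proof (intro ballI ext)
      fix R' b assume "R' \<in> {R'. standard_tableau k n (remove_box l r) m R'}"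
      then have "R' \<in> ?S \<rightarrow>\<^sub>E {1..card ?S}"
        using standard_tableau_iff[OF finite_skew_boxes[OF removable(1) m]] by (simp add: S)
      then show "restrict (R'(corner l r := Suc N)) ?S b = R' b"
        using PiE_arb[of R' ?S _ b] by (cases "b \<in> ?S") auto
    qed
    show "(\<lambda>R. restrict R ?S) ` {R. standard_tableau k n l m R \<and> R (corner l r) = Suc N}
        \<subseteq> {R'. standard_tableau k n (remove_box l r) m R'}"
      using standard_tableau_restrict_corner[OF r removable(2)] by (intro image_subsetI) simp
    show "(\<lambda>R'. R'(corner l r := Suc N)) ` {R'. standard_tableau k n (remove_box l r) m R'}
        \<subseteq> {R. standard_tableau k n l m R \<and> R (corner l r) = Suc N}"
      using standard_tableau_extend_corner[OF r removable] by (intro image_subsetI) simp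
  qed
  then show ?thesis
    unfolding num_syt_def by (rule bij_betw_same_card)
qed

lemma num_syt_Suc:
  "num_syt k n l m = (\<Sum>r<k. if cyl (remove_box l r) \<and> cyl_subseteq m (remove_box l r)
      then num_syt k n (remove_box l r) m else 0)"
proof -
  define G where "G = {r \<in> {..<k}. cyl (remove_box l r) \<and> cyl_subseteq m (remove_box l r)}"
  define A where "A r = {R. standard_tableau k n l m R \<and> R (corner l r) = Suc N}" for r
  have "{R. standard_tableau k n l m R} = (\<Union>r\<in>G. A r)"
    by (auto simp: G_def A_def elim: max_entry_at_corner)
  moreover have "A r \<inter> A s = {}" if "r \<in> G" "s \<in> G" "r \<noteq> s" for r s
  proof -
    have neq: "R (corner l r) \<noteq> R (corner l s)" if "standard_tableau k n l m R" for R
      using that standard_tableau_Suc_iff corner_inj[OF l, of r s] \<open>r \<in> G\<close> \<open>s \<in> G\<close> \<open>r \<noteq> s\<close>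
        skew_boxes_remove_corner(1)
      by (auto simp: G_def bij_betw_def dest: inj_onD)
    show ?thesis
    proof (rule equals0I)
      fix R assume "R \<in> A r \<inter> A s"
      then show False
        using neq[of R] by (simp add: A_def)
    qed
  qed
  moreover have "finite (A r)" for r
    using finite_standard_tableaux[OF finite_skew_boxes[OF l m]] by (simp add: A_def)
  ultimately have "num_syt k n l m = (\<Sum>r\<in>G. card (A r))"
    unfolding num_syt_def by (simp add: card_UN_disjoint G_def)
  also have "\<dots> = (\<Sum>r\<in>G. num_syt k n (remove_box l r) m)"
    by (intro sum.cong) (auto simp: A_def G_def card_standard_tableaux_max_at_corner)
  also have "\<dots> = (\<Sum>r<k. if cyl (remove_box l r) \<and> cyl_subseteq m (remove_box l r)
      then num_syt k n (remove_box l r) m else 0)"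
    unfolding G_def by (rule sum.inter_filter) simp
  finally show ?thesis .
qed

end

subsection \<open>Counting tableaux with the up and down operators\<close>

definition subpartitions :: "(int \<Rightarrow> int) \<Rightarrow> nat \<Rightarrow> (int \<Rightarrow> int) set" where
  "subpartitions l b = {m. cyl m \<and> cyl_subseteq m l \<and> card (skew_boxes k n l m) = b}"

definition superpartitions :: "(int \<Rightarrow> int) \<Rightarrow> nat \<Rightarrow> (int \<Rightarrow> int) set" where
  "superpartitions m a = {l. cyl l \<and> cyl_subseteq m l \<and> card (skew_boxes k n l m) = a}"

lemma remove_word_mem_subpartitions:
  assumes l: "cyl l" and w: "w \<in> words b" and chain: "cyl_chain (remove_word l w) w"
  shows "remove_word l w \<in> subpartitions l b"
proof -
  have m: "cyl (remove_word l w)"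
    using chain by (rule cyl_chain_cyl)
  have le: "cyl_subseteq (remove_word l w) l"
    using le_add_word[of "remove_word l w" _ w] by (simp add: cyl_subseteq_def)
  show ?thesis
    using card_skew_boxes[OF l m le] skew_size_add_word[OF w, of "remove_word l w"] m le
    by (simp add: subpartitions_def)
qed

lemma card_chains_eq_up_pow_delta:
  assumes "cyl l"
  shows "card {w \<in> words b. cyl_chain (remove_word l w) w \<and> remove_word l w = m} = (up ^^ b) (delta m) l"
  unfolding up_pow_expand[OF assms] card_eq_sum sum.inter_filter[OF finite_words]
  by (intro sum.cong) (auto simp: delta_def)

lemma num_syt_eq_up_pow:
  assumes "cyl l" "cyl m" "cyl_subseteq m l"
  shows "num_syt k n l m = (up ^^ card (skew_boxes k n l m)) (delta m) l"
  using assms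
proof (induction "card (skew_boxes k n l m)" arbitrary: l)
  case 0
  then have "l = m"
    using card_skew_boxes[of l m] skew_size_eq_0_imp_eq[of l m] by simp
  then show ?case
    using 0(1) by (simp add: num_syt_self delta_def)
next
  case (Suc N)
  have "(up ^^ N) (delta m) (remove_box l r) = 0"
    if r: "r < k" and removable: "cyl (remove_box l r)" and not_le: "\<not> cyl_subseteq m (remove_box l r)" for r
  proof (rule ccontr)
    assume "(up ^^ N) (delta m) (remove_box l r) \<noteq> 0"
    then obtain w where "w \<in> words N" "cyl_chain (remove_word (remove_box l r) w) w"
        "remove_word (remove_box l r) w = m"
      unfolding card_chains_eq_up_pow_delta[OF removable, symmetric] by (auto simp: card_gt_0_iff)
    then show False
      using remove_word_mem_subpartitions[OF removable] not_le by (auto simp: subpartitions_def)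
  qed
  moreover have "card (skew_boxes k n (remove_box l r) m) = N"
    if "r < k" "cyl_subseteq m (remove_box l r)" for r
    using skew_boxes_remove_corner(2)[OF Suc.prems Suc.hyps(2)[symmetric] that] .
  ultimately have "num_syt k n l m = (\<Sum>r<k. if cyl l \<and> cyl (remove_box l r)
      then (up ^^ N) (delta m) (remove_box l r) else 0)"
    unfolding num_syt_Suc[OF Suc.prems Suc.hyps(2)[symmetric]]
    using Suc.hyps(1) Suc.prems by (intro sum.cong) auto
  then show ?case
    by (simp add: Suc.hyps(2)[symmetric] up_def)
qed

lemma skew_entry_le_card:
  assumes "cyl l" "cyl m" "cyl_subseteq m l" "x \<in> {0..<int k}"
  shows "l x - m x \<le> int (card (skew_boxes k n l m))"
  unfolding card_skew_boxes[OF assms(1-3)] skew_size_def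
  using assms(3,4) by (intro member_le_sum) (auto simp: cyl_subseteq_def)

lemma finite_subpartitions:
  assumes l: "cyl l"
  shows "finite (subpartitions l b)"
proof (rule finite_subset[OF _ finite_cyl_between[of "\<lambda>x. l x - int b" l]])
  show "subpartitions l b \<subseteq> {m. cyl m \<and> (\<forall>x\<in>{0..<int k}. l x - int b \<le> m x \<and> m x \<le> l x)}"
    using skew_entry_le_card[OF l] by (fastforce simp: subpartitions_def cyl_subseteq_def)
qed

lemma finite_superpartitions:
  assumes m: "cyl m"
  shows "finite (superpartitions m a)"
proof (rule finite_subset[OF _ finite_cyl_between[of m "\<lambda>x. m x + int a"]])
  show "superpartitions m a \<subseteq> {l. cyl l \<and> (\<forall>x\<in>{0..<int k}. m x \<le> l x \<and> l x \<le> m x + int a)}"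
    using skew_entry_le_card[OF _ m] by (fastforce simp: superpartitions_def cyl_subseteq_def)
qed

lemma up_pow_eq_sum_subpartitions:
  assumes l: "cyl l"
  shows "(up ^^ b) v l = (\<Sum>m\<in>subpartitions l b. num_syt k n l m * v m)"
proof -
  let ?C = "{w \<in> words b. cyl_chain (remove_word l w) w}"
  have "(up ^^ b) v l = (\<Sum>w\<in>?C. v (remove_word l w))"
    by (simp add: up_pow_expand[OF l] sum.inter_filter[OF finite_words])
  also have "\<dots> = (\<Sum>m\<in>subpartitions l b. card {w \<in> ?C. remove_word l w = m} * v m)"
    using sum_fun_comp[where S = ?C and g = "remove_word l" and f = v, OF _ finite_subpartitions[OF l]]
      remove_word_mem_subpartitions[OF l] finite_words
    by auto
  also have "\<dots> = (\<Sum>m\<in>subpartitions l b. num_syt k n l m * v m)"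
    using card_chains_eq_up_pow_delta[OF l] num_syt_eq_up_pow[OF l]
    by (intro sum.cong) (auto simp: subpartitions_def)
  finally show ?thesis .
qed

lemma down_pow_eq_sum_superpartitions:
  assumes m: "cyl m"
  shows "(down ^^ a) v m = (\<Sum>l\<in>superpartitions m a. num_syt k n l m * v l)"
proof -
  let ?C = "{w \<in> words a. cyl_chain m w}"
  have "(down ^^ a) v m = (\<Sum>w\<in>?C. v (add_word m w))"
    by (simp add: down_pow_expand[OF m] sum.inter_filter[OF finite_words])
  also have "\<dots> = (\<Sum>l\<in>superpartitions m a. card {w \<in> ?C. add_word m w = l} * v l)"
  proof -
    have "add_word m ` ?C \<subseteq> superpartitions m a"
      using remove_word_mem_subpartitions[of "add_word m w" w a for w] cyl_chain_cyl_add_word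
      by (auto simp: superpartitions_def subpartitions_def)
    then show ?thesis
      using sum_fun_comp[where S = ?C and g = "add_word m" and f = v, OF _ finite_superpartitions[OF m]] finite_words by simp
  qed
  also have "\<dots> = (\<Sum>l\<in>superpartitions m a. num_syt k n l m * v l)"
  proof (intro sum.cong refl)
    fix l assume "l \<in> superpartitions m a"
    then have l: "cyl l" "cyl_subseteq m l" "card (skew_boxes k n l m) = a"
      by (auto simp: superpartitions_def)
    have "{w \<in> ?C. add_word m w = l} = {w \<in> words a. cyl_chain (remove_word l w) w \<and> remove_word l w = m}"
      by (auto simp: remove_word_eq_iff)
    then show "card {w \<in> ?C. add_word m w = l} * v l = num_syt k n l m * v l"
      using card_chains_eq_up_pow_delta[OF l(1)] num_syt_eq_up_pow[OF l(1) m l(2)] l(3) by simp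
  qed
  finally show ?thesis .
qed

lemma down_pow_delta:
  assumes "cyl m"
  shows "(down ^^ a) (delta l) m = (if l \<in> superpartitions m a then num_syt k n l m else 0)"
proof -
  have "(down ^^ a) (delta l) m = (\<Sum>l'\<in>superpartitions m a. if l' = l then num_syt k n l m else 0)"
    unfolding down_pow_eq_sum_superpartitions[OF assms] delta_def by (intro sum.cong) auto
  then show ?thesis
    using finite_superpartitions[OF assms] by simp
qed

lemma up_pow_delta:
  assumes "cyl l"
  shows "(up ^^ b) (delta m) l = (if m \<in> subpartitions l b then num_syt k n l m else 0)"
proof -
  have "(up ^^ b) (delta m) l = (\<Sum>m'\<in>subpartitions l b. if m' = m then num_syt k n l m else 0)"
    unfolding up_pow_eq_sum_subpartitions[OF assms] delta_def by (intro sum.cong) auto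
  then show ?thesis
    using finite_subpartitions[OF assms] by simp
qed

text \<open>The sizes of \<open>\<alpha>/\<mu>\<close> and \<open>\<beta>/\<mu>\<close> (and of \<open>\<lambda>/\<beta>\<close> and \<open>\<lambda>/\<alpha>\<close>) differ by the
  signed size of \<open>\<alpha>/\<beta>\<close>; \<open>nat\<close> truncates only when both sums are empty.\<close>

lemma sum_common_subpartitions:
  assumes alpha: "cyl alpha" and beta: "cyl beta"
  shows "(\<Sum>mu \<in> {mu. cyl mu \<and> cyl_subseteq mu alpha \<and> cyl_subseteq mu beta \<and>
              finite (skew_boxes k n alpha mu) \<and> card (skew_boxes k n alpha mu) = a}.
            num_syt k n alpha mu * num_syt k n beta mu)
       = (up ^^ nat (int a - skew_size alpha beta)) ((down ^^ a) (delta alpha)) beta"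
    (is "sum _ ?S = (up ^^ ?b) ?v beta")
proof -
  have card_b: "card (skew_boxes k n beta mu) = ?b" if "mu \<in> ?S" for mu
    using that card_skew_boxes[OF alpha, of mu] card_skew_boxes[OF beta, of mu]
      skew_size_split[of alpha mu beta] by auto
  have v: "?v mu = (if mu \<in> ?S then num_syt k n alpha mu else 0)"
    if "mu \<in> subpartitions beta ?b" for mu
    using that down_pow_delta[of mu a alpha] finite_skew_boxes[OF alpha] alpha
    by (auto simp: subpartitions_def superpartitions_def)
  have "sum (\<lambda>mu. num_syt k n alpha mu * num_syt k n beta mu) ?S =
      (\<Sum>mu\<in>subpartitions beta ?b. num_syt k n beta mu * ?v mu)"
  proof (rule sum.mono_neutral_cong_left[OF finite_subpartitions[OF beta]])
    show sub: "?S \<subseteq> subpartitions beta ?b"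
      using card_b by (auto simp: subpartitions_def)
    show "\<forall>mu\<in>subpartitions beta ?b - ?S. num_syt k n beta mu * ?v mu = 0"
      using v by auto
    show "num_syt k n alpha mu * num_syt k n beta mu = num_syt k n beta mu * ?v mu" if "mu \<in> ?S" for mu
      using v[of mu] sub that by auto
  qed
  also have "\<dots> = (up ^^ ?b) ?v beta"
    by (rule up_pow_eq_sum_subpartitions[OF beta, symmetric])
  finally show ?thesis .
qed

lemma sum_common_superpartitions:
  assumes alpha: "cyl alpha" and beta: "cyl beta"
  shows "(\<Sum>lam \<in> {lam. cyl lam \<and> cyl_subseteq alpha lam \<and> cyl_subseteq beta lam \<and>
              finite (skew_boxes k n lam beta) \<and> card (skew_boxes k n lam beta) = a}.
            num_syt k n lam alpha * num_syt k n lam beta)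
       = (down ^^ a) ((up ^^ nat (int a - skew_size alpha beta)) (delta alpha)) beta"
    (is "sum _ ?T = (down ^^ a) ?v beta")
proof -
  let ?b = "nat (int a - skew_size alpha beta)"
  have card_b: "card (skew_boxes k n lam alpha) = ?b" if "lam \<in> ?T" for lam
    using that card_skew_boxes[OF _ alpha, of lam] card_skew_boxes[OF _ beta, of lam]
      skew_size_split[of lam beta alpha] by auto
  have v: "?v lam = (if lam \<in> ?T then num_syt k n lam alpha else 0)"
    if "lam \<in> superpartitions beta a" for lam
    using that up_pow_delta[of lam ?b alpha] finite_skew_boxes[OF _ beta, of lam] card_b alpha
    by (auto simp: subpartitions_def superpartitions_def)
  have "sum (\<lambda>lam. num_syt k n lam alpha * num_syt k n lam beta) ?T =
      (\<Sum>lam\<in>superpartitions beta a. num_syt k n lam beta * ?v lam)"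
  proof (rule sum.mono_neutral_cong_left[OF finite_superpartitions[OF beta]])
    show sub: "?T \<subseteq> superpartitions beta a"
      by (auto simp: superpartitions_def)
    show "\<forall>lam\<in>superpartitions beta a - ?T. num_syt k n lam beta * ?v lam = 0"
      using v by auto
    show "num_syt k n lam alpha * num_syt k n lam beta = num_syt k n lam beta * ?v lam" if "lam \<in> ?T" for lam
      using v[of lam] sub that by auto
  qed
  also have "\<dots> = (down ^^ a) ?v beta"
    by (rule down_pow_eq_sum_superpartitions[OF beta, symmetric])
  finally show ?thesis .
qed

end

theorem mainTheorem3:
  fixes k n m :: nat and alpha beta :: "int \<Rightarrow> int"
  assumes "1 \<le> k" and "k < n"
    and "cyl_partition k n alpha" and "cyl_partition k n beta"
  shows "(\<Sum>mu \<in> {mu. cyl_partition k n mu \<and> cyl_subseteq mu alpha \<and> cyl_subseteq mu beta \<and>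
                      finite (skew_boxes k n alpha mu) \<and> card (skew_boxes k n alpha mu) = m}.
            num_syt k n alpha mu * num_syt k n beta mu)
       = (\<Sum>lam \<in> {lam. cyl_partition k n lam \<and> cyl_subseteq alpha lam \<and> cyl_subseteq beta lam \<and>
                      finite (skew_boxes k n lam beta) \<and> card (skew_boxes k n lam beta) = m}.
            num_syt k n lam alpha * num_syt k n lam beta)"
proof -
  interpret cylinder k n
    using assms(1,2) by unfold_locales
  show ?thesis
    unfolding sum_common_subpartitions[OF assms(3,4)] sum_common_superpartitions[OF assms(3,4)]
    by (rule down_pow_up_pow_commute[symmetric, THEN fun_cong])
qed

end
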